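(* Consider the dispersionless Kadomtsev–Petviashvili (dKP) equation written as the two-component first-order system $$u_t=uu_x+w_y,\qquad u_y=w_x$$ for $u(x,y,t)$, $w(x,y,t)$. Two-phase solutions of this system, i.e. solutions for which $(u,w)$ satisfy a pair of commuting two-component hydrodynamic-type systems $(u,w)^T_t=A(u,w)(u,w)^T_x$, $(u,w)^T_y=B(u,w)(u,w)^T_x$ (compatible with the dKP system) and are given implicitly by the generalised hodograph formula $x\,I+t\,A(u,w)+y\,B(u,w)=C(u,w)$, where $(u,w)^T_\tau=C(u,w)(u,w)^T_x$ is a further flow commuting with both, are given by the implicit formulae $$x+(z_u+u)t=m_u,\qquad y+z_w t=m_w,$$ where the functions $z(u,w)$ and $m(u,w)$ satisfy the PDEs $$z_{uu}+z_wz_{uw}-z_uz_{ww}+1=0,\qquad m_{uu}+z_wm_{uw}-z_um_{ww}=0 .$$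
   Context: Subscripts denote partial derivatives. $I$ is the $2\times 2$ identity matrix. Two-phase solutions are the solutions obtained from two-component hydrodynamic reductions, with the general solution of such a reduction given by Tsarev's generalised hodograph formula as described in the claim. *)

theory Defs
  imports "HOL-Analysis.Analysis"
begin

text \<open>State vector (u,w) is an element of real^2 (u = U$1, w = U$2); 2x2 matrices of
  functions of (u,w) are maps real^2 => real^2^2.  Points of space-time are triples (x,y,t).\<close>

definition C1_on :: "('a::euclidean_space \<Rightarrow> 'b::real_normed_vector) \<Rightarrow> 'a set \<Rightarrow> bool" where
  "C1_on f S \<longleftrightarrow> (\<exists>f'. (\<forall>p\<in>S. (f has_derivative f' p) (at p)) \<and>
                        (\<forall>v. continuous_on S (\<lambda>p. f' p v)))"

text \<open>Two hydrodynamic-type systems U_t = A(U) U_x and U_s = C(U) U_x commute: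
  U_ts = U_st identically, i.e. for every value p of U, every 1-jet v = U_x and every
  2-jet a = U_xx.\<close>
definition hydro_commute ::
  "(real^2 \<Rightarrow> real^2^2) \<Rightarrow> (real^2 \<Rightarrow> real^2^2) \<Rightarrow> (real^2) set \<Rightarrow> bool" where
  "hydro_commute A C D \<longleftrightarrow> (\<forall>p\<in>D. \<forall>v a.
     (frechet_derivative A (at p) (C p *v v)) *v v + A p *v ((frechet_derivative C (at p) v) *v v + C p *v a)
   = (frechet_derivative C (at p) (A p *v v)) *v v + C p *v ((frechet_derivative A (at p) v) *v v + A p *v a))"

text \<open>The pair U_t = A U_x, U_y = B U_x is compatible with the dKP system
  u_t = u u_x + w_y, u_y = w_x: the dKP equations hold for every 1-jet.\<close>
definition dKP_compatible :: "(real^2 \<Rightarrow> real^2^2) \<Rightarrow> (real^2 \<Rightarrow> real^2^2) \<Rightarrow> (real^2) set \<Rightarrow> bool" where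
  "dKP_compatible A B D \<longleftrightarrow> (\<forall>p\<in>D. \<forall>v.
     (A p *v v) $ 1 = p $ 1 * v $ 1 + (B p *v v) $ 2 \<and> (B p *v v) $ 1 = v $ 2)"

definition has_partials :: "(real^2 \<Rightarrow> real) \<Rightarrow> (real^2 \<Rightarrow> real) \<Rightarrow> (real^2 \<Rightarrow> real) \<Rightarrow> (real^2) set \<Rightarrow> bool" where
  "has_partials f fu fw S \<longleftrightarrow>
     (\<forall>p\<in>S. (f has_derivative (\<lambda>h. fu p * h $ 1 + fw p * h $ 2)) (at p))"

definition two_phase_solution ::
  "(real \<times> real \<times> real \<Rightarrow> real^2) \<Rightarrow> (real \<times> real \<times> real) set \<Rightarrow> (real^2) set \<Rightarrow>
   (real^2 \<Rightarrow> real^2^2) \<Rightarrow> (real^2 \<Rightarrow> real^2^2) \<Rightarrow> (real^2 \<Rightarrow> real^2^2) \<Rightarrow> bool" where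
  "two_phase_solution U \<Omega> D A B C \<longleftrightarrow>
     open \<Omega> \<and> open D \<and> U ` \<Omega> \<subseteq> D \<and>
     C1_on A D \<and> C1_on B D \<and> C1_on C D \<and>
     dKP_compatible A B D \<and>
     hydro_commute A B D \<and> hydro_commute A C D \<and> hydro_commute B C D \<and>
     (\<forall>q\<in>\<Omega>. \<exists>DU. (U has_derivative DU) (at q) \<and>
        DU (0,0,1) = A (U q) *v DU (1,0,0) \<and>
        DU (0,1,0) = B (U q) *v DU (1,0,0)) \<and>
     (\<forall>x y t. (x,y,t) \<in> \<Omega> \<longrightarrow>
        x *\<^sub>R mat 1 + t *\<^sub>R A (U (x,y,t)) + y *\<^sub>R B (U (x,y,t)) = C (U (x,y,t)))"

end

theory Submission
  imports Defs
begin

text \<open>Compatibility with dKP forces \<open>B = [[0, 1], [b, c]]\<close> and fixes the first row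
  \<open>(u + b, c)\<close> of \<open>A\<close>. Since \<open>B\<close> is a companion matrix, every matrix commuting with it is
  determined by its first row, which fixes \<open>A\<close> completely and the second row of \<open>C\<close>.
  Differentiating these identities and inserting them into the first-order part of the
  commutation conditions shows that the rows \<open>(b, c)\<close> of \<open>B\<close> and \<open>(C\<^sub>1\<^sub>1, C\<^sub>1\<^sub>2)\<close> of \<open>C\<close> are
  closed 1-forms satisfying the two second-order equations. On a ball they have potentials
  \<open>z\<close> and \<open>m\<close> (Poincare lemma, via the line integral along radial segments), and the
  first row of the hodograph formula \<open>x I + t A + y B = C\<close> reads
  \<open>x + (z\<^sub>u + u) t = m\<^sub>u\<close>, \<open>y + z\<^sub>w t = m\<^sub>w\<close>.\<close>

lemma convex_segment_point_mem:
  assumes "convex S" "q \<in> S" "p \<in> S" "s \<in> {0..1}"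
  shows "q + s *\<^sub>R (p - q) \<in> S"
  using convexD_alt[OF assms(1-3), of s] assms(4) by (simp add: algebra_simps)

lemma has_derivative_segment_integrand:
  fixes F :: "'a::real_inner \<Rightarrow> 'a"
  assumes "(F has_derivative DF) (at (q + s *\<^sub>R (x - q)))"
  shows "((\<lambda>x. F (q + s *\<^sub>R (x - q)) \<bullet> (x - q)) has_derivative
          (\<lambda>h. (s *\<^sub>R DF h) \<bullet> (x - q) + F (q + s *\<^sub>R (x - q)) \<bullet> h)) (at x within S)"
proof -
  have "((\<lambda>x. q + s *\<^sub>R (x - q)) has_derivative (\<lambda>h. s *\<^sub>R h)) (at x within S)"
    by (auto intro!: derivative_eq_intros simp: algebra_simps)
  then have "((\<lambda>x. F (q + s *\<^sub>R (x - q))) has_derivative (\<lambda>h. DF (s *\<^sub>R h))) (at x within S)"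
    using has_derivative_compose assms by blast
  then have "((\<lambda>x. F (q + s *\<^sub>R (x - q)) \<bullet> (x - q)) has_derivative
      (\<lambda>h. F (q + s *\<^sub>R (x - q)) \<bullet> h + DF (s *\<^sub>R h) \<bullet> (x - q))) (at x within S)"
    by (rule has_derivative_inner[THEN has_derivative_eq_rhs]) (auto intro!: derivative_eq_intros)
  moreover have "linear DF" using assms has_derivative_linear by blast
  ultimately show ?thesis
    by (elim has_derivative_eq_rhs) (simp add: fun_eq_iff linear_scale add.commute)
qed

lemma leibniz_rule_linear:
  fixes f :: "'a::euclidean_space \<Rightarrow> real \<Rightarrow> real"
  assumes U: "convex U" "open U" "x0 \<in> U"
    and df: "\<And>x t. x \<in> U \<Longrightarrow> t \<in> {a..b} \<Longrightarrow> ((\<lambda>x. f x t) has_derivative Df x t) (at x within U)"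
    and cont: "\<And>h. continuous_on (U \<times> {a..b}) (\<lambda>(x, t). Df x t h)"
    and int: "\<And>x. x \<in> U \<Longrightarrow> f x integrable_on {a..b}"
  shows "((\<lambda>x. integral {a..b} (f x)) has_derivative (\<lambda>h. integral {a..b} (\<lambda>t. Df x0 t h))) (at x0)"
proof -
  define D where "D x t = Blinfun (Df x t)" for x t
  have D_apply: "blinfun_apply (D x t) = Df x t" if "x \<in> U" "t \<in> {a..b}" for x t
    using has_derivative_bounded_linear[OF df[OF that]] by (simp add: D_def bounded_linear_Blinfun_apply)
  have cont_D: "continuous_on (U \<times> {a..b}) (\<lambda>(x, t). D x t)"
  proof (rule continuous_on_blinfun_componentwise)
    fix h :: 'a
    show "continuous_on (U \<times> {a..b}) (\<lambda>xt. blinfun_apply (case xt of (x, t) \<Rightarrow> D x t) h)"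
      using cont[of h] by (rule continuous_on_eq) (auto simp: D_apply)
  qed
  have "((\<lambda>x. integral (cbox a b) (f x)) has_derivative integral (cbox a b) (D x0)) (at x0 within U)"
    using df int D_apply by (intro leibniz_rule[OF _ _ cont_D[folded box_real(2)] U(3,1)]) auto
  moreover have "blinfun_apply (integral {a..b} (D x0)) = (\<lambda>h. integral {a..b} (\<lambda>t. Df x0 t h))"
  proof
    fix h
    have "continuous_on {a..b} (\<lambda>t. (x0, t))" "(\<lambda>t. (x0, t)) ` {a..b} \<subseteq> U \<times> {a..b}"
      using U(3) by (auto intro!: continuous_intros)
    then have "continuous_on {a..b} (D x0)"
      using continuous_on_compose2[OF cont_D] by fastforce
    then have "blinfun_apply (integral {a..b} (D x0)) h = integral {a..b} (\<lambda>t. D x0 t h)"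
      by (intro blinfun_apply_integral integrable_continuous_interval)
    also have "\<dots> = integral {a..b} (\<lambda>t. Df x0 t h)"
      by (rule integral_cong) (simp add: D_apply[OF U(3)])
    finally show "blinfun_apply (integral {a..b} (D x0)) h = \<dots>" .
  qed
  ultimately show ?thesis
    using at_within_open[OF U(3,2)] by simp
qed

lemma has_derivative_segment_line_integral:
  fixes F :: "'a::euclidean_space \<Rightarrow> 'a"
  assumes S: "convex S" "open S" "q \<in> S" "p \<in> S"
    and dF: "\<And>p. p \<in> S \<Longrightarrow> (F has_derivative DF p) (at p)"
    and cont_DF: "\<And>v. continuous_on S (\<lambda>p. DF p v)"
  shows "((\<lambda>p. integral {0..1} (\<lambda>s. F (q + s *\<^sub>R (p - q)) \<bullet> (p - q))) has_derivative
          (\<lambda>h. integral {0..1} (\<lambda>s. (s *\<^sub>R DF (q + s *\<^sub>R (p - q)) h) \<bullet> (p - q) + F (q + s *\<^sub>R (p - q)) \<bullet> h)))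
         (at p)"
proof (rule leibniz_rule_linear[OF S(1,2,4)])
  define \<gamma> where "\<gamma> ps = q + snd ps *\<^sub>R (fst ps - q)" for ps :: "'a \<times> real"
  have \<gamma>_cont: "continuous_on (S \<times> {0..1}) \<gamma>"
    unfolding \<gamma>_def by (auto intro!: continuous_intros)
  have \<gamma>_image: "\<gamma> ` (S \<times> {0..1}) \<subseteq> S"
    using convex_segment_point_mem[OF S(1,3)] by (auto simp: \<gamma>_def)
  have cont_F: "continuous_on S F"
    using dF by (meson has_derivative_continuous continuous_at_imp_continuous_on)
  show "((\<lambda>x. F (q + s *\<^sub>R (x - q)) \<bullet> (x - q)) has_derivative
      (\<lambda>h. (s *\<^sub>R DF (q + s *\<^sub>R (x - q)) h) \<bullet> (x - q) + F (q + s *\<^sub>R (x - q)) \<bullet> h)) (at x within S)"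
    if "x \<in> S" "s \<in> {0..1}" for x s
    using convex_segment_point_mem[OF S(1,3) that] by (intro has_derivative_segment_integrand dF)
  show "continuous_on (S \<times> {0..1}) (\<lambda>(x, s).
      (s *\<^sub>R DF (q + s *\<^sub>R (x - q)) h) \<bullet> (x - q) + F (q + s *\<^sub>R (x - q)) \<bullet> h)" for h
    using continuous_on_compose2[OF cont_DF \<gamma>_cont \<gamma>_image] continuous_on_compose2[OF cont_F \<gamma>_cont \<gamma>_image]
    by (auto simp: split_beta \<gamma>_def intro!: continuous_intros)
  show "(\<lambda>s. F (q + s *\<^sub>R (x - q)) \<bullet> (x - q)) integrable_on {0..1}" if "x \<in> S" for x
  proof (intro integrable_continuous_interval continuous_intros)
    show "continuous_on {0..1} (\<lambda>s. F (q + s *\<^sub>R (x - q)))"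
      by (rule continuous_on_compose2[OF cont_F])
        (auto intro!: continuous_intros convex_segment_point_mem[OF S(1,3) that])
  qed
qed

lemma has_integral_radial_derivative:
  fixes F :: "'a::euclidean_space \<Rightarrow> 'a"
  assumes segment: "\<And>s. s \<in> {0..1} \<Longrightarrow> q + s *\<^sub>R (p - q) \<in> S"
    and dF: "\<And>x. x \<in> S \<Longrightarrow> (F has_derivative DF x) (at x)"
    and sym: "\<And>x h k. x \<in> S \<Longrightarrow> DF x h \<bullet> k = DF x k \<bullet> h"
  shows "((\<lambda>s. (s *\<^sub>R DF (q + s *\<^sub>R (p - q)) h) \<bullet> (p - q) + F (q + s *\<^sub>R (p - q)) \<bullet> h)
           has_integral F p \<bullet> h) {0..1}"
proof -
  define \<gamma> where "\<gamma> s = q + s *\<^sub>R (p - q)" for s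
  define g where "g s = s * (F (\<gamma> s) \<bullet> h)" for s
  have "((\<lambda>s. (s *\<^sub>R DF (\<gamma> s) h) \<bullet> (p - q) + F (\<gamma> s) \<bullet> h) has_integral g 1 - g 0) {0..1}"
  proof (rule fundamental_theorem_of_calculus)
    fix s :: real assume s: "s \<in> {0..1}"
    have \<gamma>S: "\<gamma> s \<in> S" using segment s unfolding \<gamma>_def .
    have "(\<gamma> has_derivative (\<lambda>t. t *\<^sub>R (p - q))) (at s within {0..1})"
      unfolding \<gamma>_def by (auto intro!: derivative_eq_intros)
    from has_derivative_compose[OF this dF[OF \<gamma>S]]
    have "((\<lambda>s. F (\<gamma> s) \<bullet> h) has_derivative (\<lambda>t. DF (\<gamma> s) (t *\<^sub>R (p - q)) \<bullet> h))
        (at s within {0..1})"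
      by (rule has_derivative_inner_left)
    note dFh = this
    have "(g has_derivative (\<lambda>t. s * (DF (\<gamma> s) (t *\<^sub>R (p - q)) \<bullet> h) + t * (F (\<gamma> s) \<bullet> h)))
        (at s within {0..1})"
      unfolding g_def
      by (rule has_derivative_mult[OF _ dFh, THEN has_derivative_eq_rhs])
        (auto intro!: derivative_eq_intros)
    moreover have "(\<lambda>t. s * (DF (\<gamma> s) (t *\<^sub>R (p - q)) \<bullet> h) + t * (F (\<gamma> s) \<bullet> h))
        = (\<lambda>t. t *\<^sub>R ((s *\<^sub>R DF (\<gamma> s) h) \<bullet> (p - q) + F (\<gamma> s) \<bullet> h))"
    proof -
      have "linear (DF (\<gamma> s))" using dF[OF \<gamma>S] has_derivative_linear by blast
      then have "DF (\<gamma> s) (t *\<^sub>R (p - q)) \<bullet> h = t * (DF (\<gamma> s) h \<bullet> (p - q))" for t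
        using sym[OF \<gamma>S, of "p - q" h] by (simp add: linear_scale)
      then show ?thesis by (simp add: fun_eq_iff distrib_left)
    qed
    ultimately show "(g has_vector_derivative (s *\<^sub>R DF (\<gamma> s) h) \<bullet> (p - q) + F (\<gamma> s) \<bullet> h)
        (at s within {0..1})"
      by (simp add: has_vector_derivative_def)
  qed simp
  then show ?thesis by (simp add: g_def \<gamma>_def)
qed

lemma symmetric_derivative_has_potential:
  fixes F :: "'a::euclidean_space \<Rightarrow> 'a"
  assumes S: "convex S" "open S"
    and dF: "\<And>p. p \<in> S \<Longrightarrow> (F has_derivative DF p) (at p)"
    and cont_DF: "\<And>v. continuous_on S (\<lambda>p. DF p v)"
    and sym: "\<And>p h k. p \<in> S \<Longrightarrow> DF p h \<bullet> k = DF p k \<bullet> h"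
  shows "\<exists>z. \<forall>p\<in>S. (z has_derivative (\<lambda>h. F p \<bullet> h)) (at p)"
proof (cases "S = {}")
  case False
  then obtain q where q: "q \<in> S" by blast
  have "((\<lambda>p. integral {0..1} (\<lambda>s. F (q + s *\<^sub>R (p - q)) \<bullet> (p - q))) has_derivative (\<lambda>h. F p \<bullet> h))
      (at p)" if "p \<in> S" for p
    using has_derivative_segment_line_integral[OF S q that dF cont_DF]
      integral_unique[OF has_integral_radial_derivative[OF convex_segment_point_mem[OF S(1) q that] dF sym]]
    by simp
  then show ?thesis by blast
qed simp

abbreviation e1 :: "real^2" where "e1 \<equiv> axis 1 1"
abbreviation e2 :: "real^2" where "e2 \<equiv> axis 2 1"

lemma axis_2_nth [simp]: "e1$1 = 1" "e1$2 = 0" "e2$1 = 0" "e2$2 = 1"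
  by (simp_all add: axis_def)

lemma linear_expansion_2:
  fixes L :: "real^2 \<Rightarrow> 'b::real_vector"
  assumes "linear L"
  shows "L h = h$1 *\<^sub>R L e1 + h$2 *\<^sub>R L e2"
proof -
  have "h = h$1 *\<^sub>R e1 + h$2 *\<^sub>R e2" by (simp add: vec_eq_iff forall_2)
  then have "L h = L (h$1 *\<^sub>R e1 + h$2 *\<^sub>R e2)" by simp
  then show ?thesis using assms by (simp add: linear_add linear_scale)
qed

lemma matrix_vector_mult_nth_2: "(M *v (v::real^2)) $ i = M$i$1 * v$1 + M$i$2 * v$2"
  by (simp add: matrix_vector_mult_def sum_2)

lemma matrix_matrix_mult_nth_2: "((M::real^2^'n) ** (N::real^'m^2)) $ i $ j = M$i$1 * N$1$j + M$i$2 * N$2$j"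
  by (simp add: matrix_matrix_mult_def sum_2)

lemma has_derivative_vec_nth:
  "(f has_derivative f') F \<Longrightarrow> ((\<lambda>p. f p $ i) has_derivative (\<lambda>h. f' h $ i)) F"
  by (rule bounded_linear.has_derivative[OF bounded_linear_vec_nth])

lemma has_derivative_unique_on_open:
  assumes "(f has_derivative f') (at p)" "(g has_derivative g') (at p)"
    and "open D" "p \<in> D" "\<And>x. x \<in> D \<Longrightarrow> f x = g x"
  shows "f' = g'"
proof -
  have "(f has_derivative g') (at p)"
    using has_derivative_transform_within_open[OF assms(2-4)] assms(5) by auto
  then show ?thesis using has_derivative_unique assms(1) by blast
qed

lemma dKP_compatible_entries:
  assumes "dKP_compatible A B D" "p \<in> D"
  shows "B p$1$1 = 0" "B p$1$2 = 1" "A p$1$1 = p$1 + B p$2$1" "A p$1$2 = B p$2$2"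
  using assms(1)[unfolded dKP_compatible_def, rule_format, OF assms(2), of e1]
    assms(1)[unfolded dKP_compatible_def, rule_format, OF assms(2), of e2]
  by (simp_all add: matrix_vector_mult_nth_2)

lemma hydro_commute_matrix_commute:
  assumes "hydro_commute A C D" "p \<in> D"
  shows "A p ** C p = C p ** A p"
proof -
  have "A p *v (C p *v a) = C p *v (A p *v a)" for a
    using assms(1)[unfolded hydro_commute_def, rule_format, OF assms(2), of 0 a] by simp
  then show ?thesis by (simp add: matrix_eq matrix_vector_mul_assoc)
qed

lemma commute_companion_entries:
  fixes B M :: "real^2^2"
  assumes "B$1$1 = 0" "B$1$2 = 1" "B ** M = M ** B"
  shows "M$2$1 = B$2$1 * M$1$2" "M$2$2 = M$1$1 + B$2$2 * M$1$2"
  using arg_cong[OF assms(3), of "\<lambda>X. X$1$1"] arg_cong[OF assms(3), of "\<lambda>X. X$1$2"] assms(1,2)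
  by (simp_all add: matrix_matrix_mult_nth_2 algebra_simps)

lemma hydro_commute_first_order:
  assumes "hydro_commute A C D" "p \<in> D"
    and "(A has_derivative A') (at p)" "(C has_derivative C') (at p)"
  shows "A' (C p *v v) *v v + A p *v (C' v *v v) = C' (A p *v v) *v v + C p *v (A' v *v v)"
  using assms(1)[unfolded hydro_commute_def, rule_format, OF assms(2), of v 0]
  by (simp add: frechet_derivative_at[OF assms(3), symmetric] frechet_derivative_at[OF assms(4), symmetric])

lemma dKP_compatible_first_row_derivative:
  assumes "dKP_compatible A B D" "open D" "p \<in> D" "(B has_derivative B') (at p)"
  shows "B' h $1$1 = 0" "B' h $1$2 = 0"
proof -
  note B_entry = has_derivative_vec_nth[OF has_derivative_vec_nth[OF assms(4)]]
  have "(\<lambda>h. B' h $1$1) = (\<lambda>h. 0)" "(\<lambda>h. B' h $1$2) = (\<lambda>h. 0)"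
    by (rule has_derivative_unique_on_open[OF B_entry has_derivative_const assms(2,3)];
        simp add: dKP_compatible_entries[OF assms(1)])+
  then show "B' h $1$1 = 0" "B' h $1$2 = 0" by (simp_all add: fun_eq_iff)
qed

lemma dKP_reduction_closed_and_pde:
  assumes dKP: "dKP_compatible A B D" and comm: "hydro_commute A B D" and D: "open D" "p \<in> D"
    and dA: "(A has_derivative A') (at p)" and dB: "(B has_derivative B') (at p)"
  shows "B' e2 $2$1 = B' e1 $2$2"
    and "B' e1 $2$1 + B p$2$2 * B' e2 $2$1 - B p$2$1 * B' e2 $2$2 + 1 = 0"
proof -
  note B1 = dKP_compatible_entries[OF dKP]
  have A2: "A x$2$1 = B x$2$1 * B x$2$2" "A x$2$2 = x$1 + B x$2$1 + B x$2$2 * B x$2$2"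
    if "x \<in> D" for x
    using commute_companion_entries[OF B1(1,2)[OF that] hydro_commute_matrix_commute[OF comm that, symmetric]]
      B1(3,4)[OF that] by (simp_all add: algebra_simps)
  note A_entry = has_derivative_vec_nth[OF has_derivative_vec_nth[OF dA]]
  note B_entry = has_derivative_vec_nth[OF has_derivative_vec_nth[OF dB]]
  note u = has_derivative_vec_nth[OF has_derivative_ident]
  have "(\<lambda>h. A' h$1$1) = (\<lambda>h. h$1 + B' h$2$1)"
    by (rule has_derivative_unique_on_open[OF A_entry has_derivative_add[OF u B_entry] D]) (simp add: B1(3))
  moreover have "(\<lambda>h. A' h$1$2) = (\<lambda>h. B' h$2$2)"
    by (rule has_derivative_unique_on_open[OF A_entry B_entry D]) (simp add: B1(4))
  moreover have "(\<lambda>h. A' h$2$1) = (\<lambda>h. B p$2$1 * B' h$2$2 + B' h$2$1 * B p$2$2)"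
    by (rule has_derivative_unique_on_open[OF A_entry has_derivative_mult[OF B_entry B_entry] D])
      (simp add: A2(1))
  moreover have "(\<lambda>h. A' h$2$2) = (\<lambda>h. (h$1 + B' h$2$1) + (B p$2$2 * B' h$2$2 + B' h$2$2 * B p$2$2))"
    by (rule has_derivative_unique_on_open[OF A_entry
          has_derivative_add[OF has_derivative_add[OF u B_entry] has_derivative_mult[OF B_entry B_entry]] D])
      (simp add: A2(2))
  ultimately have dA_entries: "A' h$1$1 = h$1 + B' h$2$1" "A' h$1$2 = B' h$2$2"
      "A' h$2$1 = B p$2$1 * B' h$2$2 + B' h$2$1 * B p$2$2"
      "A' h$2$2 = h$1 + B' h$2$1 + 2 * B p$2$2 * B' h$2$2" for h
    by (simp_all add: fun_eq_iff)
  have "linear B'" using dB has_derivative_linear by blast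
  note B'_expand = linear_expansion_2[OF this]
  \<comment> \<open>Along the jet \<open>v = e2\<close> the first component of the commutation identity is the
    closedness and the second one the PDE.\<close>
  note H = hydro_commute_first_order[OF comm D(2) dA dB, of e2]
  note simps = matrix_vector_mult_nth_2 B1[OF D(2)] A2[OF D(2)] dA_entries
    dKP_compatible_first_row_derivative[OF dKP D dB]
    B'_expand[of "B p *v e2"] B'_expand[of "A p *v e2"]
  from arg_cong[OF H, of "\<lambda>v. v$1"] show closed: "B' e2 $2$1 = B' e1 $2$2"
    by (simp add: simps)
  from arg_cong[OF H, of "\<lambda>v. v$2"] closed show "B' e1 $2$1 + B p$2$2 * B' e2 $2$1 - B p$2$1 * B' e2 $2$2 + 1 = 0"
    by (simp add: simps algebra_simps)
qed

lemma dKP_hodograph_closed_and_pde: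
  assumes dKP: "dKP_compatible A B D" and comm: "hydro_commute B C D" and D: "open D" "p \<in> D"
    and dB: "(B has_derivative B') (at p)" and dC: "(C has_derivative C') (at p)"
  shows "C' e2 $1$1 = C' e1 $1$2"
    and "C' e1 $1$1 + B p$2$2 * C' e2 $1$1 - B p$2$1 * C' e2 $1$2 = 0"
proof -
  note B1 = dKP_compatible_entries[OF dKP]
  have C2: "C x$2$1 = B x$2$1 * C x$1$2" "C x$2$2 = C x$1$1 + B x$2$2 * C x$1$2" if "x \<in> D" for x
    using commute_companion_entries[OF B1(1,2)[OF that] hydro_commute_matrix_commute[OF comm that]] .
  note B_entry = has_derivative_vec_nth[OF has_derivative_vec_nth[OF dB]]
  note C_entry = has_derivative_vec_nth[OF has_derivative_vec_nth[OF dC]]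
  have "(\<lambda>h. C' h$2$1) = (\<lambda>h. B p$2$1 * C' h$1$2 + B' h$2$1 * C p$1$2)"
    by (rule has_derivative_unique_on_open[OF C_entry has_derivative_mult[OF B_entry C_entry] D])
      (simp add: C2(1))
  moreover have "(\<lambda>h. C' h$2$2) = (\<lambda>h. C' h$1$1 + (B p$2$2 * C' h$1$2 + B' h$2$2 * C p$1$2))"
    by (rule has_derivative_unique_on_open[OF C_entry
          has_derivative_add[OF C_entry has_derivative_mult[OF B_entry C_entry]] D])
      (simp add: C2(2))
  ultimately have dC_entries: "C' h$2$1 = B p$2$1 * C' h$1$2 + B' h$2$1 * C p$1$2"
      "C' h$2$2 = C' h$1$1 + B p$2$2 * C' h$1$2 + B' h$2$2 * C p$1$2" for h
    by (simp_all add: fun_eq_iff)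
  have "linear B'" "linear C'" using dB dC has_derivative_linear by blast+
  note B'_expand = linear_expansion_2[OF this(1)] and C'_expand = linear_expansion_2[OF this(2)]
  note H = hydro_commute_first_order[OF comm D(2) dB dC, of e2]
  note simps = matrix_vector_mult_nth_2 B1(1,2)[OF D(2)] C2[OF D(2)] dC_entries
    dKP_compatible_first_row_derivative[OF dKP D dB]
    B'_expand[of "B p *v e2"] B'_expand[of "C p *v e2"] C'_expand[of "B p *v e2"]
  from arg_cong[OF H, of "\<lambda>v. v$1"] show closed: "C' e2 $1$1 = C' e1 $1$2"
    by (simp add: simps)
  from arg_cong[OF H, of "\<lambda>v. v$2"] closed
  show "C' e1 $1$1 + B p$2$2 * C' e2 $1$1 - B p$2$1 * C' e2 $1$2 = 0"
    by (simp add: simps algebra_simps)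
qed

lemma has_partials_matrix_entry:
  assumes "\<And>p. p \<in> S \<Longrightarrow> (M has_derivative M' p) (at p)"
  shows "has_partials (\<lambda>p. M p $i$j) (\<lambda>p. M' p e1 $i$j) (\<lambda>p. M' p e2 $i$j) S"
  unfolding has_partials_def
proof
  fix p assume "p \<in> S"
  note dM = assms[OF this]
  have lin: "linear (M' p)" using dM has_derivative_linear by blast
  have "(\<lambda>h. M' p h $i$j) = (\<lambda>h. M' p e1 $i$j * h$1 + M' p e2 $i$j * h$2)"
  proof
    fix h
    show "M' p h $i$j = M' p e1 $i$j * h$1 + M' p e2 $i$j * h$2"
      using linear_expansion_2[OF lin, of h] by (simp add: algebra_simps)
  qed
  with has_derivative_vec_nth[OF has_derivative_vec_nth[OF dM], where i1=i and i=j]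
  show "((\<lambda>p. M p $i$j) has_derivative (\<lambda>h. M' p e1 $i$j * h$1 + M' p e2 $i$j * h$2)) (at p)"
    by simp
qed

lemma closed_matrix_row_has_potential:
  fixes M :: "real^2 \<Rightarrow> real^2^2"
  assumes S: "convex S" "open S"
    and dM: "\<And>p. p \<in> S \<Longrightarrow> (M has_derivative M' p) (at p)"
    and cont: "\<And>v. continuous_on S (\<lambda>p. M' p v)"
    and closed: "\<And>p. p \<in> S \<Longrightarrow> M' p e2 $i$1 = M' p e1 $i$2"
  shows "\<exists>f. has_partials f (\<lambda>p. M p$i$1) (\<lambda>p. M p$i$2) S \<and>
      has_partials (\<lambda>p. M p$i$1) (\<lambda>p. M' p e1$i$1) (\<lambda>p. M' p e2$i$1) S \<and>
      has_partials (\<lambda>p. M p$i$2) (\<lambda>p. M' p e2$i$1) (\<lambda>p. M' p e2$i$2) S"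
proof -
  have "\<exists>f. \<forall>p\<in>S. (f has_derivative (\<lambda>h. M p $ i \<bullet> h)) (at p)"
  proof (rule symmetric_derivative_has_potential[OF S])
    show "((\<lambda>p. M p $ i) has_derivative (\<lambda>h. M' p h $ i)) (at p)" if "p \<in> S" for p
      using has_derivative_vec_nth[OF dM[OF that]] .
    show "continuous_on S (\<lambda>p. M' p v $ i)" for v
      using cont[of v] by (intro continuous_intros)
    show "M' p h $ i \<bullet> k = M' p k $ i \<bullet> h" if "p \<in> S" for p h k
    proof -
      have "linear (M' p)" using dM[OF that] has_derivative_linear by blast
      note expand = linear_expansion_2[OF this]
      show ?thesis
        using closed[OF that] expand[of h] expand[of k]
        by (simp add: inner_vec_def sum_2 algebra_simps)
    qed
  qed
  then obtain f where "\<forall>p\<in>S. (f has_derivative (\<lambda>h. M p $ i \<bullet> h)) (at p)" ..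
  then have "has_partials f (\<lambda>p. M p$i$1) (\<lambda>p. M p$i$2) S"
    by (simp add: has_partials_def inner_vec_def sum_2 mult.commute)
  moreover have "has_partials (\<lambda>p. M p$i$2) (\<lambda>p. M' p e2$i$1) (\<lambda>p. M' p e2$i$2) S"
    using has_partials_matrix_entry[OF dM, where i=i and j=2] closed by (simp add: has_partials_def)
  ultimately show ?thesis using has_partials_matrix_entry[OF dM] by blast
qed

lemma dKP_hodograph_entries:
  assumes "dKP_compatible A B D" "p \<in> D" "x *\<^sub>R mat 1 + t *\<^sub>R A p + y *\<^sub>R B p = C p"
  shows "x + (B p$2$1 + p$1) * t = C p$1$1" "y + B p$2$2 * t = C p$1$2"
  using arg_cong[OF assms(3), of "\<lambda>M. M$1$1"] arg_cong[OF assms(3), of "\<lambda>M. M$1$2"]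
    dKP_compatible_entries[OF assms(1,2)]
  by (simp_all add: mat_def algebra_simps)

lemma two_phase_solution_hodograph_entries:
  assumes "two_phase_solution U \<Omega> D A B C" "(x, y, t) \<in> \<Omega>"
  shows "x + (B (U (x,y,t))$2$1 + U (x,y,t)$1) * t = C (U (x,y,t))$1$1 \<and>
    y + B (U (x,y,t))$2$2 * t = C (U (x,y,t))$1$2"
proof -
  have "dKP_compatible A B D" "U (x,y,t) \<in> D"
    "x *\<^sub>R mat 1 + t *\<^sub>R A (U (x,y,t)) + y *\<^sub>R B (U (x,y,t)) = C (U (x,y,t))"
    using assms by (simp_all add: two_phase_solution_def image_subset_iff)
  then show ?thesis using dKP_hodograph_entries by blast
qed

lemma two_phase_solution_potentials:
  assumes "two_phase_solution U \<Omega> D A B C" and S: "convex S" "open S" "S \<subseteq> D"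
  obtains B' C' :: "real^2 \<Rightarrow> real^2 \<Rightarrow> real^2^2" and z m where
    "has_partials z (\<lambda>p. B p$2$1) (\<lambda>p. B p$2$2) S"
    "has_partials (\<lambda>p. B p$2$1) (\<lambda>p. B' p e1$2$1) (\<lambda>p. B' p e2$2$1) S"
    "has_partials (\<lambda>p. B p$2$2) (\<lambda>p. B' p e2$2$1) (\<lambda>p. B' p e2$2$2) S"
    "has_partials m (\<lambda>p. C p$1$1) (\<lambda>p. C p$1$2) S"
    "has_partials (\<lambda>p. C p$1$1) (\<lambda>p. C' p e1$1$1) (\<lambda>p. C' p e2$1$1) S"
    "has_partials (\<lambda>p. C p$1$2) (\<lambda>p. C' p e2$1$1) (\<lambda>p. C' p e2$1$2) S"
    "\<forall>p\<in>S. B' p e1$2$1 + B p$2$2 * B' p e2$2$1 - B p$2$1 * B' p e2$2$2 + 1 = 0"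
    "\<forall>p\<in>S. C' p e1$1$1 + B p$2$2 * C' p e2$1$1 - B p$2$1 * C' p e2$1$2 = 0"
proof -
  have D: "open D" and dKP: "dKP_compatible A B D"
    and comm: "hydro_commute A B D" "hydro_commute B C D"
    and C1: "C1_on A D" "C1_on B D" "C1_on C D"
    using assms(1) by (simp_all add: two_phase_solution_def)
  obtain A' where dA: "\<And>p. p \<in> D \<Longrightarrow> (A has_derivative A' p) (at p)"
    using C1(1) unfolding C1_on_def by blast
  obtain B' where dB: "\<And>p. p \<in> D \<Longrightarrow> (B has_derivative B' p) (at p)"
    and cont_B': "\<And>v. continuous_on D (\<lambda>p. B' p v)"
    using C1(2) unfolding C1_on_def by blast
  obtain C' where dC: "\<And>p. p \<in> D \<Longrightarrow> (C has_derivative C' p) (at p)"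
    and cont_C': "\<And>v. continuous_on D (\<lambda>p. C' p v)"
    using C1(3) unfolding C1_on_def by blast
  have closed_B: "B' p e2$2$1 = B' p e1$2$2"
    and pde_z: "B' p e1$2$1 + B p$2$2 * B' p e2$2$1 - B p$2$1 * B' p e2$2$2 + 1 = 0"
    and closed_C: "C' p e2$1$1 = C' p e1$1$2"
    and pde_m: "C' p e1$1$1 + B p$2$2 * C' p e2$1$1 - B p$2$1 * C' p e2$1$2 = 0"
    if "p \<in> S" for p
    using dKP_reduction_closed_and_pde[OF dKP comm(1) D _ dA dB]
      dKP_hodograph_closed_and_pde[OF dKP comm(2) D _ dB dC] that S(3) by blast+
  show ?thesis
    using that closed_matrix_row_has_potential[OF S(1,2) dB continuous_on_subset[OF cont_B'] closed_B]
      closed_matrix_row_has_potential[OF S(1,2) dC continuous_on_subset[OF cont_C'] closed_C]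
      pde_z pde_m S(3) by blast
qed

theorem proposition1:
  fixes U :: "real \<times> real \<times> real \<Rightarrow> real^2"
    and \<Omega> :: "(real \<times> real \<times> real) set" and D :: "(real^2) set"
    and A B C :: "real^2 \<Rightarrow> real^2^2"
  assumes "two_phase_solution U \<Omega> D A B C"
  shows "\<forall>q\<in>D. \<exists>r>0. ball q r \<subseteq> D \<and>
           (\<exists>z zu zw zuu zuw zww m mu mw muu muw mww :: real^2 \<Rightarrow> real.
              has_partials z zu zw (ball q r) \<and>
              has_partials zu zuu zuw (ball q r) \<and>
              has_partials zw zuw zww (ball q r) \<and>
              has_partials m mu mw (ball q r) \<and>
              has_partials mu muu muw (ball q r) \<and>
              has_partials mw muw mww (ball q r) \<and>
              (\<forall>p\<in>ball q r. zuu p + zw p * zuw p - zu p * zww p + 1 = 0) \<and>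
              (\<forall>p\<in>ball q r. muu p + zw p * muw p - zu p * mww p = 0) \<and>
              (\<forall>x y t. (x,y,t) \<in> \<Omega> \<longrightarrow> U (x,y,t) \<in> ball q r \<longrightarrow>
                 x + (zu (U (x,y,t)) + U (x,y,t) $ 1) * t = mu (U (x,y,t)) \<and>
                 y + zw (U (x,y,t)) * t = mw (U (x,y,t))))"
proof (intro ballI, goal_cases)
  case (1 q)
  obtain r where r: "r > 0" "ball q r \<subseteq> D"
    using assms 1 open_contains_ball[of D] by (auto simp: two_phase_solution_def)
  show ?case
  proof (rule two_phase_solution_potentials[OF assms convex_ball open_ball r(2)], goal_cases)
    case (1 B' C' z m)
    then show ?case using r two_phase_solution_hodograph_entries[OF assms] by blast
  qed
qed

end
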